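(* Suppose that a connected graph $H$ contains the star $K_{1,4}$ as a subgraph but does not contain any subgraph isomorphic to $S_{4,4}$. Then $H$ contains a vertex of degree more than $(v(H)/2)^{1/7}$.
   Context: Graphs are finite simple graphs; $v(H)$ is the number of vertices of $H$. The sparkler graph $S_{4,4}$ is obtained from the star $K_{1,3}$ and the path $P_4$ on 4 vertices by adding an edge between an end vertex of $P_4$ and the central vertex of $K_{1,3}$. *)

theory Defs
  imports Complex_Main
begin

definition simple_graph :: "'a set \<Rightarrow> ('a \<Rightarrow> 'a \<Rightarrow> bool) \<Rightarrow> bool" where
  "simple_graph V E \<longleftrightarrow> finite V \<and> (\<forall>x y. E x y \<longrightarrow> x \<in> V \<and> y \<in> V)
     \<and> (\<forall>x y. E x y \<longrightarrow> E y x) \<and> (\<forall>x. \<not> E x x)"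

definition connected_graph :: "'a set \<Rightarrow> ('a \<Rightarrow> 'a \<Rightarrow> bool) \<Rightarrow> bool" where
  "connected_graph V E \<longleftrightarrow> V \<noteq> {} \<and> (\<forall>x\<in>V. \<forall>y\<in>V. E\<^sup>*\<^sup>* x y)"

definition degree :: "'a set \<Rightarrow> ('a \<Rightarrow> 'a \<Rightarrow> bool) \<Rightarrow> 'a \<Rightarrow> nat" where
  "degree V E v = card {u \<in> V. E v u}"

definition contains_subgraph ::
  "'b set \<Rightarrow> ('b \<Rightarrow> 'b \<Rightarrow> bool) \<Rightarrow> 'a set \<Rightarrow> ('a \<Rightarrow> 'a \<Rightarrow> bool) \<Rightarrow> bool" where
  "contains_subgraph VP EP V E \<longleftrightarrow>
     (\<exists>f. inj_on f VP \<and> f ` VP \<subseteq> V \<and> (\<forall>x\<in>VP. \<forall>y\<in>VP. EP x y \<longrightarrow> E (f x) (f y)))"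

definition star14_V :: "nat set" where "star14_V = {0..4}"
definition star14_E :: "nat \<Rightarrow> nat \<Rightarrow> bool" where
  "star14_E x y \<longleftrightarrow> x \<in> star14_V \<and> y \<in> star14_V \<and>
     ((x = 0 \<and> y \<noteq> 0) \<or> (y = 0 \<and> x \<noteq> 0))"

text \<open>Sparkler S_{4,4}: star K_{1,3} with centre 0 and leaves 1,2,3; path P_4 = 4-5-6-7;
  extra edge between the path end 4 and the centre 0.\<close>
definition sparkler44_V :: "nat set" where "sparkler44_V = {0..7}"
definition sparkler44_edges :: "(nat \<times> nat) set" where
  "sparkler44_edges = {(0,1),(0,2),(0,3),(0,4),(4,5),(5,6),(6,7)}"
definition sparkler44_E :: "nat \<Rightarrow> nat \<Rightarrow> bool" where
  "sparkler44_E x y \<longleftrightarrow> (x,y) \<in> sparkler44_edges \<or> (y,x) \<in> sparkler44_edges"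

end

theory Submission
  imports Defs
begin

text \<open>Let \<open>v\<close> be the centre of a copy of \<open>K\<^sub>1\<^sub>,\<^sub>4\<close>. If some vertex had distance at least 4
  from \<open>v\<close>, a shortest path \<open>v x\<^sub>1 x\<^sub>2 x\<^sub>3 x\<^sub>4\<close> towards it, together with three leaves of the
  star other than \<open>x\<^sub>1\<close>, would form an \<open>S\<^sub>4\<^sub>,\<^sub>4\<close>: the path vertices \<open>x\<^sub>2, x\<^sub>3, x\<^sub>4\<close> are not
  adjacent to \<open>v\<close>, so they avoid the leaves. Hence every vertex lies within distance 3 of \<open>v\<close>,
  and with maximum degree \<open>\<Delta> \<ge> 4\<close> this gives \<open>v(H) \<le> (\<Delta> + 1)\<^sup>3 < 2\<Delta>\<^sup>7\<close>.\<close>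

definition max_degree :: "'a set \<Rightarrow> ('a \<Rightarrow> 'a \<Rightarrow> bool) \<Rightarrow> nat" where
  "max_degree V E = Max (degree V E ` V)"

lemma degree_le_max_degree: "finite V \<Longrightarrow> w \<in> V \<Longrightarrow> degree V E w \<le> max_degree V E"
  by (simp add: max_degree_def)

lemma max_degree_attained:
  assumes "finite V" "V \<noteq> {}"
  obtains u where "u \<in> V" "degree V E u = max_degree V E"
proof -
  have "max_degree V E \<in> degree V E ` V"
    unfolding max_degree_def using assms by (intro Max_in) auto
  then show ?thesis
    using that by (metis imageE)
qed

lemma card_le_degree:
  assumes "simple_graph V E" "\<And>l. l \<in> L \<Longrightarrow> E v l"
  shows "card L \<le> degree V E v"
  unfolding degree_def using assms by (intro card_mono) (auto simp: simple_graph_def)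

fun graph_ball :: "('a \<Rightarrow> 'a \<Rightarrow> bool) \<Rightarrow> 'a \<Rightarrow> nat \<Rightarrow> 'a set" where
  "graph_ball E v 0 = {v}"
| "graph_ball E v (Suc k) = graph_ball E v k \<union> {u. \<exists>w\<in>graph_ball E v k. E w u}"

lemma center_in_graph_ball: "v \<in> graph_ball E v k"
  by (induction k) auto

lemma graph_ball_mono: "k \<le> l \<Longrightarrow> graph_ball E v k \<subseteq> graph_ball E v l"
  by (induction l) (auto simp: le_Suc_eq)

lemma graph_ball_subset:
  assumes "simple_graph V E" "v \<in> V"
  shows "graph_ball E v k \<subseteq> V"
  using assms by (induction k) (auto simp: simple_graph_def)

lemma card_graph_ball_le:
  assumes G: "simple_graph V E" and "v \<in> V" and deg: "\<And>w. w \<in> V \<Longrightarrow> degree V E w \<le> d"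
  shows "card (graph_ball E v k) \<le> (d + 1) ^ k"
proof (induction k)
  case 0
  then show ?case by simp
next
  case (Suc k)
  let ?B = "graph_ball E v k" and ?N = "\<lambda>w. {u \<in> V. E w u}"
  have BV: "?B \<subseteq> V"
    using graph_ball_subset[OF assms(1,2)] .
  then have finB: "finite ?B"
    using G finite_subset by (auto simp: simple_graph_def)
  have "graph_ball E v (Suc k) = ?B \<union> (\<Union>w\<in>?B. ?N w)"
    using G by (auto simp: simple_graph_def)
  also have "card \<dots> \<le> card ?B + card (\<Union>w\<in>?B. ?N w)"
    by (rule card_Un_le)
  also have "card (\<Union>w\<in>?B. ?N w) \<le> (\<Sum>w\<in>?B. card (?N w))"
    by (rule card_UN_le[OF finB])
  also have "(\<Sum>w\<in>?B. card (?N w)) \<le> card ?B * d"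
    using sum_bounded_above[of ?B "\<lambda>w. card (?N w)" d] deg BV by (auto simp: degree_def)
  also have "card ?B + card ?B * d = card ?B * (d + 1)"
    by simp
  also have "\<dots> \<le> (d + 1) ^ k * (d + 1)"
    using Suc by (rule mult_le_mono1)
  finally show ?case by (simp add: mult.commute)
qed

lemma graph_ball_escape:
  assumes "E\<^sup>*\<^sup>* v w" "w \<notin> graph_ball E v k"
  obtains x where "x \<in> graph_ball E v (Suc k) - graph_ball E v k"
  using assms
proof (induction rule: rtranclp_induct)
  case base
  then show ?case using center_in_graph_ball by metis
next
  case (step y z)
  then show ?case by (cases "y \<in> graph_ball E v k") auto
qed

lemma graph_ball_predecessor:
  assumes "x \<in> graph_ball E v (Suc (Suc k)) - graph_ball E v (Suc k)"
  obtains y where "y \<in> graph_ball E v (Suc k) - graph_ball E v k" "E y x"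
  using assms by auto

text \<open>The path is a shortest one: \<open>x\<^sub>i\<close> has distance exactly \<open>i\<close> from \<open>v\<close>.\<close>
lemma path_beyond_graph_ball_3:
  assumes "E\<^sup>*\<^sup>* v w" "w \<notin> graph_ball E v 3"
  obtains x1 x2 x3 x4 where "E v x1" "E x1 x2" "E x2 x3" "E x3 x4"
    "distinct [v, x1, x2, x3, x4]" "\<not> E v x2" "\<not> E v x3" "\<not> E v x4"
proof -
  let ?B = "graph_ball E v"
  have num: "Suc 3 = 4" "Suc 2 = 3" "Suc 1 = 2" "Suc 0 = 1"
    by simp_all
  obtain x4 where x4: "x4 \<in> ?B 4 - ?B 3"
    using graph_ball_escape[OF assms, unfolded num] .
  obtain x3 where x3: "x3 \<in> ?B 3 - ?B 2" "E x3 x4"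
    using graph_ball_predecessor[of x4 E v 2, unfolded num] x4 by blast
  obtain x2 where x2: "x2 \<in> ?B 2 - ?B 1" "E x2 x3"
    using graph_ball_predecessor[of x3 E v 1, unfolded num] x3 by blast
  obtain x1 where x1: "x1 \<in> ?B 1 - ?B 0" "E x1 x2"
    using graph_ball_predecessor[of x2 E v 0, unfolded num] x2 by blast
  have mono: "?B 0 \<subseteq> ?B 1" "?B 1 \<subseteq> ?B 2" "?B 2 \<subseteq> ?B 3"
    by (rule graph_ball_mono; simp)+
  have v: "v \<in> ?B 0" by simp
  have nbr: "y \<in> ?B 1" if "E v y" for y
    using that by (simp add: One_nat_def)
  have "distinct [v, x1, x2, x3, x4]"
    using x1(1) x2(1) x3(1) x4 mono v by (simp only: distinct.simps set_simps) blast
  moreover have "\<not> E v x2" "\<not> E v x3" "\<not> E v x4"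
    using x2(1) x3(1) x4 mono nbr by blast+
  moreover have "E v x1"
    using x1(1) by (simp add: One_nat_def)
  ultimately show ?thesis using that x1(2) x2(2) x3(2) by blast
qed

lemma contains_sparkler44I:
  assumes "distinct [v,l1,l2,l3,a,b,c,d]" "set [v,l1,l2,l3,a,b,c,d] \<subseteq> V"
    "\<forall>x y. E x y \<longrightarrow> E y x"
    "E v l1" "E v l2" "E v l3" "E v a" "E a b" "E b c" "E c d"
  shows "contains_subgraph sparkler44_V sparkler44_E V E"
proof -
  let ?xs = "[v,l1,l2,l3,a,b,c,d]"
  have inj: "inj_on (nth ?xs) sparkler44_V"
    by (rule inj_on_nth[OF assms(1)]) (auto simp: sparkler44_V_def)
  have img: "nth ?xs ` sparkler44_V \<subseteq> V"
  proof (rule image_subsetI)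
    fix i assume "i \<in> sparkler44_V"
    then have "?xs ! i \<in> set ?xs"
      by (intro nth_mem) (simp add: sparkler44_V_def)
    then show "?xs ! i \<in> V"
      using assms(2) by blast
  qed
  have "E (?xs ! x) (?xs ! y)" if "(x, y) \<in> sparkler44_edges" for x y
    using that assms(4-) unfolding sparkler44_edges_def by auto
  then have edges: "\<forall>x\<in>sparkler44_V. \<forall>y\<in>sparkler44_V. sparkler44_E x y \<longrightarrow> E (?xs ! x) (?xs ! y)"
    using assms(3) unfolding sparkler44_E_def by blast
  show ?thesis unfolding contains_subgraph_def using inj img edges by blast
qed

lemma contains_sparkler44_if_star_and_path:
  assumes G: "simple_graph V E"
    and L: "4 \<le> card L" "\<And>l. l \<in> L \<Longrightarrow> E v l"
    and path: "E v x1" "E x1 x2" "E x2 x3" "E x3 x4" "distinct [v, x1, x2, x3, x4]"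
    and far: "\<not> E v x2" "\<not> E v x3" "\<not> E v x4"
  shows "contains_subgraph sparkler44_V sparkler44_E V E"
proof -
  have "3 \<le> card (L - {x1})"
    using L(1) card_Diff_singleton_if[of L x1] by auto
  then obtain S where "S \<subseteq> L - {x1}" "card S = 3"
    by (meson obtain_subset_with_card_n)
  then obtain a b c where S: "S = {a, b, c}" "a \<noteq> b" "b \<noteq> c" "a \<noteq> c" and abc: "{a, b, c} \<subseteq> L - {x1}"
    by (auto simp: card_3_iff)
  have in_V: "\<And>x y. E x y \<Longrightarrow> x \<in> V \<and> y \<in> V" and sym: "\<forall>x y. E x y \<longrightarrow> E y x"
    and irrefl: "\<And>x. \<not> E x x"
    using G by (auto simp: simple_graph_def)
  have leaves: "E v a" "E v b" "E v c"
    using abc L(2) by auto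
  show ?thesis
  proof (rule contains_sparkler44I[of v a b c x1 x2 x3 x4])
    show "distinct [v, a, b, c, x1, x2, x3, x4]"
      using S abc path(5) far leaves irrefl by auto
    show "set [v, a, b, c, x1, x2, x3, x4] \<subseteq> V"
      using in_V leaves path by auto
  qed (use sym leaves path in auto)
qed

lemma contains_star14E:
  assumes "contains_subgraph star14_V star14_E V E"
  obtains v L where "v \<in> V" "\<And>l. l \<in> L \<Longrightarrow> E v l" "card L = 4"
proof -
  obtain f where inj: "inj_on f star14_V" and img: "f ` star14_V \<subseteq> V"
    and hom: "\<forall>x\<in>star14_V. \<forall>y\<in>star14_V. star14_E x y \<longrightarrow> E (f x) (f y)"
    using assms unfolding contains_subgraph_def by blast
  have "card (f ` {1..4}) = 4"
    using card_image[OF inj_on_subset[OF inj]] by (simp add: star14_V_def)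
  moreover have "E (f 0) (f i)" if "i \<in> {1..4}" for i
  proof -
    have "0 \<in> star14_V" "i \<in> star14_V" "star14_E 0 i"
      using that by (auto simp: star14_V_def star14_E_def)
    then show ?thesis
      using hom by blast
  qed
  moreover have "f 0 \<in> V"
    using img by (auto simp: star14_V_def)
  ultimately show ?thesis
    using that[of "f 0" "f ` {1..4}"] by blast
qed

lemma sparkler44_free_graph_ball_3_eq:
  assumes G: "simple_graph V E" and C: "connected_graph V E" and "v \<in> V"
    and L: "4 \<le> card L" "\<And>l. l \<in> L \<Longrightarrow> E v l"
    and free: "\<not> contains_subgraph sparkler44_V sparkler44_E V E"
  shows "graph_ball E v 3 = V"
proof (rule subset_antisym)
  show "graph_ball E v 3 \<subseteq> V"
    using graph_ball_subset[OF G \<open>v \<in> V\<close>] .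
  show "V \<subseteq> graph_ball E v 3"
  proof (rule subsetI, rule ccontr)
    fix w assume "w \<in> V" "w \<notin> graph_ball E v 3"
    moreover have "E\<^sup>*\<^sup>* v w"
      using C \<open>v \<in> V\<close> \<open>w \<in> V\<close> by (auto simp: connected_graph_def)
    ultimately obtain x1 x2 x3 x4 where "E v x1" "E x1 x2" "E x2 x3" "E x3 x4"
      "distinct [v, x1, x2, x3, x4]" "\<not> E v x2" "\<not> E v x3" "\<not> E v x4"
      using path_beyond_graph_ball_3 by metis
    from contains_sparkler44_if_star_and_path[OF G L this] free show False
      by contradiction
  qed
qed

lemma succ_cube_less_twice_pow7:
  fixes d :: nat
  assumes "4 \<le> d"
  shows "(d + 1) ^ 3 < 2 * d ^ 7"
proof -
  have "(d + 1) ^ 3 \<le> (2 * d) ^ 3"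
    using assms by (intro power_mono) auto
  also have "\<dots> = d ^ 3 * 8"
    by simp
  also have "\<dots> < d ^ 3 * (2 * d ^ 4)"
  proof -
    have "4 ^ 4 \<le> d ^ 4"
      using assms by (rule power_mono) simp
    then show ?thesis
      using assms by (intro mult_strict_left_mono) auto
  qed
  also have "\<dots> = 2 * d ^ 7"
    by (simp flip: power_add)
  finally show ?thesis .
qed

lemma powr_inverse_less:
  fixes x y :: real
  assumes "0 \<le> x" "0 \<le> y" "0 < n" "x < y ^ n"
  shows "x powr (1 / n) < y"
proof -
  have "x powr (1 / n) = root n x"
    using assms by (simp add: root_powr_inverse)
  also have "\<dots> < root n (y ^ n)"
    using assms by simp
  also have "\<dots> = y"
    using assms by (simp add: real_root_power_cancel)
  finally show ?thesis .
qed

theorem lemma3: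
  fixes V :: "'a set" and E :: "'a \<Rightarrow> 'a \<Rightarrow> bool"
  assumes "simple_graph V E"
    and "connected_graph V E"
    and "contains_subgraph star14_V star14_E V E"
    and "\<not> contains_subgraph sparkler44_V sparkler44_E V E"
  shows "\<exists>v\<in>V. real (degree V E v) > (real (card V) / 2) powr (1 / 7)"
proof -
  have finV: "finite V"
    using assms(1) by (simp add: simple_graph_def)
  obtain L v where L: "v \<in> V" "\<And>l. l \<in> L \<Longrightarrow> E v l" "card L = 4"
    using contains_star14E[OF assms(3)] by metis
  define d where "d = max_degree V E"
  obtain u where u: "u \<in> V" "degree V E u = d"
    using max_degree_attained[of V E] finV L(1) unfolding d_def by blast
  have "4 \<le> d"
    using card_le_degree[of V E L v, OF assms(1) L(2)] L(3)
      degree_le_max_degree[of V v E, OF finV L(1)]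
    unfolding d_def by linarith
  have "card V = card (graph_ball E v 3)"
    using sparkler44_free_graph_ball_3_eq[where L = L, OF assms(1,2) L(1) _ L(2) assms(4)] L(3)
    by simp
  also have "\<dots> \<le> (d + 1) ^ 3"
    using card_graph_ball_le[OF assms(1) L(1)] degree_le_max_degree[OF finV] unfolding d_def .
  also have "\<dots> < 2 * d ^ 7"
    using succ_cube_less_twice_pow7[OF \<open>4 \<le> d\<close>] .
  finally have "real (card V) / 2 < real d ^ 7"
    by (simp add: field_simps flip: of_nat_power)
  then show ?thesis
    using u powr_inverse_less[of "real (card V) / 2" "real d" 7] by auto
qed

end
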